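(* Let $q_{12},q_{13}\in\mathbb{H}$ with $k=|q_{12}|^2+|q_{13}|^2>0$, and let $\tilde A=\begin{pmatrix}0&q_{12}&q_{13}\\0&1&0\\0&0&1\end{pmatrix}$. Then $W(\tilde A)=\bigcup_{d\in[0,1]}\mathbb{D}_{\mathbb{H}}\big(d,\sqrt{kd(1-d)}\big)$, and, identifying $\mathbb{C}=\mathbb{R}+\mathbb{R}i\subset\mathbb{H}$ with $\mathbb{R}^2$ via $x+yi\mapsto(x,y)$, $$W(\tilde A)\cap\mathbb{C}=\bigcup_{d\in[0,1]}\mathbb{D}_{\mathbb{C}}\big(d,\sqrt{kd(1-d)}\big)=\Big\{(x,y)\in\mathbb{R}^2:\ \frac{(x-\frac12)^2}{\frac{k+1}{4}}+\frac{y^2}{\frac{k}{4}}\le1\Big\}.$$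
   Context: $\mathbb{H}$ denotes the real quaternions, $|q|^2=qq^*$. The numerical range of $A\in\mathcal{M}_n(\mathbb{H})$ is $W(A)=\{\mathbf{x}^*A\mathbf{x}:\mathbf{x}\in\mathbb{H}^n,\ \mathbf{x}^*\mathbf{x}=1\}$. $\mathbb{D}_{\mathbb{H}}(c,r)=\{q\in\mathbb{H}:|q-c|\le r\}$ and $\mathbb{D}_{\mathbb{C}}(c,r)=\{z\in\mathbb{C}:|z-c|\le r\}$. *)

theory Defs
  imports "HOL-Analysis.Analysis"
begin

datatype quat = Quat (qre: real) (qi: real) (qj: real) (qk: real)

instantiation quat :: "{zero, one, plus, minus, uminus, times}"
begin
definition "0 = Quat 0 0 0 0"
definition "1 = Quat 1 0 0 0"
definition "p + q = Quat (qre p + qre q) (qi p + qi q) (qj p + qj q) (qk p + qk q)"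
definition "p - q = Quat (qre p - qre q) (qi p - qi q) (qj p - qj q) (qk p - qk q)"
definition "- q = Quat (- qre q) (- qi q) (- qj q) (- qk q)"
definition "p * q = Quat
   (qre p * qre q - qi p * qi q - qj p * qj q - qk p * qk q)
   (qre p * qi q + qi p * qre q + qj p * qk q - qk p * qj q)
   (qre p * qj q - qi p * qk q + qj p * qre q + qk p * qi q)
   (qre p * qk q + qi p * qj q - qj p * qi q + qk p * qre q)"
instance ..
end

instance quat :: comm_monoid_add
  by standard (simp_all add: plus_quat_def zero_quat_def algebra_simps)

definition qcnj :: "quat \<Rightarrow> quat" where
  "qcnj q = Quat (qre q) (- qi q) (- qj q) (- qk q)"

definition qnorm :: "quat \<Rightarrow> real" where
  "qnorm q = sqrt ((qre q)\<^sup>2 + (qi q)\<^sup>2 + (qj q)\<^sup>2 + (qk q)\<^sup>2)"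

definition quat_of_real :: "real \<Rightarrow> quat" where
  "quat_of_real r = Quat r 0 0 0"

definition quat_of_complex :: "complex \<Rightarrow> quat" where
  "quat_of_complex z = Quat (Re z) (Im z) 0 0"

definition num_range :: "nat \<Rightarrow> (nat \<Rightarrow> nat \<Rightarrow> quat) \<Rightarrow> quat set" where
  "num_range n A = {(\<Sum>i<n. \<Sum>j<n. qcnj (x i) * A i j * x j) | x :: nat \<Rightarrow> quat.
      (\<Sum>i<n. qcnj (x i) * x i) = 1}"

definition qdisc :: "quat \<Rightarrow> real \<Rightarrow> quat set" where
  "qdisc c r = {q. qnorm (q - c) \<le> r}"

definition cdisc :: "complex \<Rightarrow> real \<Rightarrow> complex set" where
  "cdisc c r = {z. cmod (z - c) \<le> r}"

text \<open>The matrix [[0,q12,q13],[0,1,0],[0,0,1]] (indices 0,1,2).\<close>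
definition Atilde :: "quat \<Rightarrow> quat \<Rightarrow> nat \<Rightarrow> nat \<Rightarrow> quat" where
  "Atilde q12 q13 i j =
     (if i = 0 \<and> j = 1 then q12
      else if i = 0 \<and> j = 2 then q13
      else if i = j \<and> (i = 1 \<or> i = 2) then 1
      else 0)"

end

theory Submission
  imports Defs
begin

text \<open>For a unit vector x write d = |x1|^2 + |x2|^2. Then x^* A x = d + x0^* (q12 x1 + q13 x2),
  where |x0| = sqrt (1 - d) and, by Cauchy-Schwarz, |q12 x1 + q13 x2| \<le> sqrt (k d); so every
  point of W lies in the disc about d of radius sqrt (k d (1 - d)). Conversely every point of
  that disc is reached with x0 = sqrt (1 - d) real, because the kernel of the row map
  (x1, x2) \<mapsto> q12 x1 + q13 x2 is nonzero and orthogonal to its minimal-norm solutions: adding a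
  suitable kernel vector adjusts |x1|^2 + |x2|^2 to exactly d. For points of C, minimising
  (x - d)^2 + y^2 - k d (1 - d) over d yields the ellipse.\<close>

lemma quat_simps [simp]:
  "qre (p * q) = qre p * qre q - qi p * qi q - qj p * qj q - qk p * qk q"
  "qi (p * q) = qre p * qi q + qi p * qre q + qj p * qk q - qk p * qj q"
  "qj (p * q) = qre p * qj q - qi p * qk q + qj p * qre q + qk p * qi q"
  "qk (p * q) = qre p * qk q + qi p * qj q - qj p * qi q + qk p * qre q"
  "qre (p + q) = qre p + qre q" "qi (p + q) = qi p + qi q"
  "qj (p + q) = qj p + qj q" "qk (p + q) = qk p + qk q"
  "qre (p - q) = qre p - qre q" "qi (p - q) = qi p - qi q"
  "qj (p - q) = qj p - qj q" "qk (p - q) = qk p - qk q"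
  "qre (- q) = - qre q" "qi (- q) = - qi q" "qj (- q) = - qj q" "qk (- q) = - qk q"
  "qre 0 = 0" "qi 0 = 0" "qj 0 = 0" "qk 0 = 0"
  "qre 1 = 1" "qi 1 = 0" "qj 1 = 0" "qk 1 = 0"
  "qre (qcnj q) = qre q" "qi (qcnj q) = - qi q" "qj (qcnj q) = - qj q" "qk (qcnj q) = - qk q"
  "qre (quat_of_real r) = r" "qi (quat_of_real r) = 0"
  "qj (quat_of_real r) = 0" "qk (quat_of_real r) = 0"
  "qre (quat_of_complex z) = Re z" "qi (quat_of_complex z) = Im z"
  "qj (quat_of_complex z) = 0" "qk (quat_of_complex z) = 0"
  by (simp_all add: times_quat_def plus_quat_def minus_quat_def uminus_quat_def zero_quat_def
      one_quat_def qcnj_def quat_of_real_def quat_of_complex_def)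

lemma quat_eqI: "qre p = qre q \<Longrightarrow> qi p = qi q \<Longrightarrow> qj p = qj q \<Longrightarrow> qk p = qk q \<Longrightarrow> p = q"
  by (rule quat.expand) simp

instance quat :: ring_1
proof
  fix a b c :: quat
  show "a * b * c = a * (b * c)" by (rule quat_eqI) (simp_all add: algebra_simps)
  show "1 * a = a" "a * 1 = a" by (rule quat_eqI; simp)+
  show "(a + b) * c = a * c + b * c" "a * (b + c) = a * b + a * c"
    by (rule quat_eqI; simp add: algebra_simps)+
  show "- a + a = 0" "a - b = a + - b" by (rule quat_eqI; simp)+
  show "(0::quat) \<noteq> 1" by (simp add: zero_quat_def one_quat_def)
qed

lemma quat_of_real_commute: "quat_of_real c * q = q * quat_of_real c"
  by (rule quat_eqI) simp_all

lemma quat_of_real_left_commute: "q * (quat_of_real c * w) = quat_of_real c * (q * w)"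
  by (metis mult.assoc quat_of_real_commute)

lemma quat_of_real_mult: "quat_of_real (a * b) = quat_of_real a * quat_of_real b"
  by (rule quat_eqI) simp_all

lemma quat_of_real_add: "quat_of_real (a + b) = quat_of_real a + quat_of_real b"
  by (rule quat_eqI) simp_all

lemma quat_of_real_1 [simp]: "quat_of_real 1 = 1"
  by (rule quat_eqI) simp_all

lemma quat_of_real_eq_1_iff [simp]: "quat_of_real a = 1 \<longleftrightarrow> a = 1"
  by (auto dest: arg_cong[of _ _ qre])

lemma qcnj_quat_of_real [simp]: "qcnj (quat_of_real a) = quat_of_real a"
  by (rule quat_eqI) simp_all

lemma quat_of_complex_of_real: "quat_of_complex (complex_of_real a) = quat_of_real a"
  by (rule quat_eqI) simp_all

lemma quat_of_complex_diff: "quat_of_complex (z - w) = quat_of_complex z - quat_of_complex w"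
  by (rule quat_eqI) simp_all

definition qnorm2 :: "quat \<Rightarrow> real" where
  "qnorm2 q = (qre q)\<^sup>2 + (qi q)\<^sup>2 + (qj q)\<^sup>2 + (qk q)\<^sup>2"

definition qinner :: "quat \<Rightarrow> quat \<Rightarrow> real" where
  "qinner p q = qre p * qre q + qi p * qi q + qj p * qj q + qk p * qk q"

lemma qnorm2_nonneg: "qnorm2 q \<ge> 0"
  by (simp add: qnorm2_def)

lemma qnorm_eq_sqrt_qnorm2: "qnorm q = sqrt (qnorm2 q)"
  by (simp add: qnorm_def qnorm2_def)

lemma power2_qnorm: "(qnorm q)\<^sup>2 = qnorm2 q"
  by (simp add: qnorm_eq_sqrt_qnorm2 qnorm2_nonneg)

lemma qnorm_nonneg: "qnorm q \<ge> 0"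
  by (simp add: qnorm_def)

lemma qnorm2_eq_0_iff: "qnorm2 q = 0 \<longleftrightarrow> q = 0"
  by (auto simp: qnorm2_def add_nonneg_eq_0_iff intro: quat_eqI)

lemma qnorm2_mult: "qnorm2 (p * q) = qnorm2 p * qnorm2 q"
  unfolding qnorm2_def by simp algebra

lemma qnorm_mult: "qnorm (p * q) = qnorm p * qnorm q"
  by (simp add: qnorm_eq_sqrt_qnorm2 qnorm2_mult real_sqrt_mult)

lemma qnorm2_quat_of_real: "qnorm2 (quat_of_real c) = c\<^sup>2"
  by (simp add: qnorm2_def)

lemma qnorm2_qcnj: "qnorm2 (qcnj q) = qnorm2 q"
  by (simp add: qnorm2_def)

lemma qnorm2_uminus: "qnorm2 (- q) = qnorm2 q"
  by (simp add: qnorm2_def)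

lemma qnorm2_add: "qnorm2 (p + q) = qnorm2 p + qnorm2 q + 2 * qinner p q"
  unfolding qnorm2_def qinner_def by simp algebra

lemma qcnj_mult_self: "qcnj q * q = quat_of_real (qnorm2 q)"
  by (rule quat_eqI) (simp_all add: qnorm2_def power2_eq_square)

lemma mult_qcnj_mult: "q * (qcnj q * v) = quat_of_real (qnorm2 q) * v"
  by (rule quat_eqI) (simp_all add: qnorm2_def power2_eq_square algebra_simps)

lemma qinner_add_right: "qinner p (a + b) = qinner p a + qinner p b"
  by (simp add: qinner_def algebra_simps)

lemma qinner_scale_left: "qinner (quat_of_real c * p) q = c * qinner p q"
  by (simp add: qinner_def algebra_simps)

lemma qinner_scale_right: "qinner p (quat_of_real c * q) = c * qinner p q"
  by (simp add: qinner_def algebra_simps)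

lemma qinner_qcnj_mult_left: "qinner (qcnj a * v) z = qinner v (a * z)"
  unfolding qinner_def by simp algebra

lemma qnorm_triangle: "qnorm (p + q) \<le> qnorm p + qnorm q"
proof -
  have pair: "qnorm p = norm (Complex (qre p) (qi p), Complex (qj p) (qk p))" for p
    by (simp add: qnorm_def norm_Pair cmod_power2 add.assoc)
  show ?thesis
    unfolding pair using norm_triangle_ineq[of "(Complex (qre p) (qi p), Complex (qj p) (qk p))"
        "(Complex (qre q) (qi q), Complex (qj q) (qk q))"]
    by (simp add: complex_add)
qed

lemma qnorm_quat_of_complex: "qnorm (quat_of_complex z) = cmod z"
  by (simp add: qnorm_def cmod_def)

lemma qnorm2_row_le: "qnorm2 (a * x + b * y) \<le> (qnorm2 a + qnorm2 b) * (qnorm2 x + qnorm2 y)"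
proof -
  have "qnorm (a * x + b * y) \<le> qnorm a * qnorm x + qnorm b * qnorm y"
    using qnorm_triangle[of "a * x" "b * y"] by (simp add: qnorm_mult)
  then have "(qnorm (a * x + b * y))\<^sup>2 \<le> (qnorm a * qnorm x + qnorm b * qnorm y)\<^sup>2"
    by (simp add: power_mono qnorm_nonneg)
  also have "\<dots> \<le> ((qnorm a)\<^sup>2 + (qnorm b)\<^sup>2) * ((qnorm x)\<^sup>2 + (qnorm y)\<^sup>2)"
    using zero_le_power2[of "qnorm a * qnorm y - qnorm b * qnorm x"]
    by (simp add: power2_eq_square algebra_simps)
  finally show ?thesis
    by (simp add: power2_qnorm)
qed

lemma exists_unit_kernel_vector: "\<exists>z w. qnorm2 z + qnorm2 w = 1 \<and> a * z + b * w = 0"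
proof (cases "a = 0")
  case True
  then show ?thesis
    by (intro exI[of _ 1] exI[of _ 0]) (simp add: qnorm2_def)
next
  case False
  define z where "z = qcnj a * b"
  define w where "w = - quat_of_real (qnorm2 a)"
  define c where "c = 1 / sqrt (qnorm2 z + qnorm2 w)"
  have "qnorm2 w > 0"
    using False qnorm2_eq_0_iff qnorm2_nonneg
    by (simp add: w_def qnorm2_uminus qnorm2_quat_of_real)
  then have "c\<^sup>2 * (qnorm2 z + qnorm2 w) = 1"
    using qnorm2_nonneg[of z] by (simp add: c_def power_divide)
  moreover have "a * z + b * w = 0"
    by (simp add: z_def w_def mult_qcnj_mult quat_of_real_commute[of "qnorm2 a" b])
  then have "a * (quat_of_real c * z) + b * (quat_of_real c * w) = 0"
    by (simp add: quat_of_real_left_commute flip: distrib_left)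
  ultimately show ?thesis
    by (intro exI[of _ "quat_of_real c * z"] exI[of _ "quat_of_real c * w"])
       (simp add: qnorm2_mult qnorm2_quat_of_real distrib_left)
qed

lemma row_mult_adjoint:
  "a * (qcnj a * v) + b * (qcnj b * v) = quat_of_real (qnorm2 a + qnorm2 b) * v"
  by (simp only: mult_qcnj_mult quat_of_real_add distrib_right)

text \<open>The minimal-norm solution (p, p') = (a^* v, b^* v) / k is orthogonal to every kernel
  vector, so adding t times a unit kernel vector raises the squared norm by exactly t^2.\<close>

lemma row_equation_solvable:
  assumes k: "k = qnorm2 a + qnorm2 b" "k > 0" and v: "qnorm2 v \<le> k * d"
  shows "\<exists>x y. qnorm2 x + qnorm2 y = d \<and> a * x + b * y = v"
proof -
  obtain z w where zw: "qnorm2 z + qnorm2 w = 1" and ker: "a * z + b * w = 0"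
    using exists_unit_kernel_vector by blast
  define p where "p = quat_of_real (1 / k) * (qcnj a * v)"
  define p' where "p' = quat_of_real (1 / k) * (qcnj b * v)"
  define t where "t = sqrt (d - qnorm2 v / k)"
  have t2: "t\<^sup>2 = d - qnorm2 v / k"
    using v k(2) by (simp add: t_def pos_divide_le_eq mult.commute)
  have "qnorm2 p + qnorm2 p' = (1 / k)\<^sup>2 * (k * qnorm2 v)"
    by (simp add: p_def p'_def k(1) qnorm2_mult qnorm2_quat_of_real qnorm2_qcnj
        distrib_right distrib_left)
  then have norm_p: "qnorm2 p + qnorm2 p' = qnorm2 v / k"
    using k(2) by (simp add: power2_eq_square)
  have orth: "qinner p z + qinner p' w = 0"
  proof -
    have "qinner p z + qinner p' w = (1 / k) * qinner v (a * z + b * w)"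
      by (simp add: p_def p'_def qinner_scale_left qinner_qcnj_mult_left qinner_add_right
          distrib_left)
    then show ?thesis
      using ker by (simp add: qinner_def)
  qed
  have sol: "a * p + b * p' = v"
  proof -
    have "a * p + b * p' = quat_of_real (1 / k) * (a * (qcnj a * v) + b * (qcnj b * v))"
      by (simp only: p_def p'_def quat_of_real_left_commute distrib_left)
    also have "\<dots> = quat_of_real (1 / k) * (quat_of_real k * v)"
      by (simp only: row_mult_adjoint k(1))
    also have "\<dots> = v"
      using k(2) by (simp add: mult.assoc[symmetric] flip: quat_of_real_mult)
    finally show ?thesis .
  qed
  have "qnorm2 (p + quat_of_real t * z) + qnorm2 (p' + quat_of_real t * w)
      = (qnorm2 p + qnorm2 p') + t\<^sup>2 * (qnorm2 z + qnorm2 w) + 2 * t * (qinner p z + qinner p' w)"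
    by (simp add: qnorm2_add qnorm2_mult qnorm2_quat_of_real qinner_scale_right algebra_simps)
  also have "\<dots> = d"
    using norm_p t2 zw orth by simp
  finally have "qnorm2 (p + quat_of_real t * z) + qnorm2 (p' + quat_of_real t * w) = d" .
  moreover have "a * (p + quat_of_real t * z) + b * (p' + quat_of_real t * w) = v"
  proof -
    have "a * (p + quat_of_real t * z) + b * (p' + quat_of_real t * w)
        = (a * p + b * p') + quat_of_real t * (a * z + b * w)"
      by (simp add: distrib_left quat_of_real_left_commute add_ac)
    then show ?thesis
      using sol ker by simp
  qed
  ultimately show ?thesis
    by blast
qed

lemma sum_qcnj_mult_self_3:
  fixes x :: "nat \<Rightarrow> quat"
  shows "(\<Sum>i<3. qcnj (x i) * x i) = quat_of_real (qnorm2 (x 0) + qnorm2 (x 1) + qnorm2 (x 2))"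
  by (simp add: numeral_3_eq_3 numeral_2_eq_2 qcnj_mult_self quat_of_real_add add_ac)

lemma quadratic_form_Atilde:
  fixes x :: "nat \<Rightarrow> quat"
  shows "(\<Sum>i<3. \<Sum>j<3. qcnj (x i) * Atilde q12 q13 i j * x j)
     = quat_of_real (qnorm2 (x 1) + qnorm2 (x 2)) + qcnj (x 0) * (q12 * x 1 + q13 * x 2)"
proof -
  have "(\<Sum>i<3. \<Sum>j<3. qcnj (x i) * Atilde q12 q13 i j * x j)
      = qcnj (x 1) * x 1 + qcnj (x 2) * x 2 + (qcnj (x 0) * q12 * x 1 + qcnj (x 0) * q13 * x 2)"
    by (simp add: numeral_3_eq_3 numeral_2_eq_2 Atilde_def add_ac)
  then show ?thesis
    by (simp add: qcnj_mult_self quat_of_real_add distrib_left mult.assoc)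
qed

lemma num_range_Atilde:
  "num_range 3 (Atilde q12 q13) =
     {quat_of_real (qnorm2 y + qnorm2 z) + qcnj x * (q12 * y + q13 * z) | x y z.
        qnorm2 x + qnorm2 y + qnorm2 z = 1}"
  (is "_ = ?S")
proof
  show "num_range 3 (Atilde q12 q13) \<subseteq> ?S"
    by (auto simp: num_range_def quadratic_form_Atilde sum_qcnj_mult_self_3)
  show "?S \<subseteq> num_range 3 (Atilde q12 q13)"
  proof clarify
    fix x y z :: quat
    assume unit: "qnorm2 x + qnorm2 y + qnorm2 z = 1"
    define u :: "nat \<Rightarrow> quat" where "u i = (if i = 0 then x else if i = 1 then y else z)" for i
    show "quat_of_real (qnorm2 y + qnorm2 z) + qcnj x * (q12 * y + q13 * z)
        \<in> num_range 3 (Atilde q12 q13)"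
      unfolding num_range_def
      by (rule CollectI, rule exI[of _ u])
         (simp add: u_def quadratic_form_Atilde sum_qcnj_mult_self_3 unit)
  qed
qed

lemma qnorm2_le_mult_imp_factor:
  assumes "qnorm2 r \<le> s * t" "0 \<le> s" "0 \<le> t"
  shows "\<exists>v. qnorm2 v \<le> t \<and> r = quat_of_real (sqrt s) * v"
proof (cases "s = 0")
  case True
  then have "r = 0"
    using assms(1) qnorm2_nonneg[of r] qnorm2_eq_0_iff by simp
  then show ?thesis
    using True assms(3) by (intro exI[of _ 0]) (simp add: qnorm2_def)
next
  case False
  then have s: "s > 0"
    using assms(2) by simp
  define v where "v = quat_of_real (1 / sqrt s) * r"
  have "qnorm2 v = qnorm2 r / s"
    using s by (simp add: v_def qnorm2_mult qnorm2_quat_of_real power_divide)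
  also have "\<dots> \<le> t"
    using s assms(1) by (simp add: pos_divide_le_eq mult.commute)
  finally have "qnorm2 v \<le> t" .
  moreover have "r = quat_of_real (sqrt s) * v"
    using s by (simp add: v_def mult.assoc[symmetric] flip: quat_of_real_mult)
  ultimately show ?thesis
    by blast
qed

lemma mem_num_range_Atilde_iff:
  assumes k: "k = qnorm2 q12 + qnorm2 q13" "k > 0"
  shows "q \<in> num_range 3 (Atilde q12 q13) \<longleftrightarrow>
           (\<exists>d\<in>{0..1}. qnorm2 (q - quat_of_real d) \<le> k * d * (1 - d))"
proof
  assume "q \<in> num_range 3 (Atilde q12 q13)"
  then obtain x y z where unit: "qnorm2 x + qnorm2 y + qnorm2 z = 1"
    and q: "q = quat_of_real (qnorm2 y + qnorm2 z) + qcnj x * (q12 * y + q13 * z)"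
    by (auto simp: num_range_Atilde)
  define d where "d = qnorm2 y + qnorm2 z"
  have x: "qnorm2 x = 1 - d"
    using unit by (simp add: d_def)
  have "qnorm2 (q - quat_of_real d) = qnorm2 x * qnorm2 (q12 * y + q13 * z)"
    by (simp add: q d_def qnorm2_mult qnorm2_qcnj)
  also have "\<dots> \<le> (1 - d) * (k * d)"
    using qnorm2_row_le[of q12 y q13 z] qnorm2_nonneg[of x]
    by (intro mult_mono) (simp_all add: x d_def k(1) qnorm2_nonneg)
  finally have "qnorm2 (q - quat_of_real d) \<le> k * d * (1 - d)"
    by (simp add: mult_ac)
  moreover have "d \<in> {0..1}"
    using unit qnorm2_nonneg[of x] qnorm2_nonneg[of y] qnorm2_nonneg[of z] by (simp add: d_def)
  ultimately show "\<exists>d\<in>{0..1}. qnorm2 (q - quat_of_real d) \<le> k * d * (1 - d)"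
    by blast
next
  assume "\<exists>d\<in>{0..1}. qnorm2 (q - quat_of_real d) \<le> k * d * (1 - d)"
  then obtain d where d: "0 \<le> d" "d \<le> 1" and r: "qnorm2 (q - quat_of_real d) \<le> (1 - d) * (k * d)"
    by (auto simp: mult_ac)
  obtain v where v: "qnorm2 v \<le> k * d" and qv: "q - quat_of_real d = quat_of_real (sqrt (1 - d)) * v"
    using qnorm2_le_mult_imp_factor[OF r] d k(2) by auto
  obtain y z where yz: "qnorm2 y + qnorm2 z = d" and row: "q12 * y + q13 * z = v"
    using row_equation_solvable[OF k v] by blast
  define x where "x = quat_of_real (sqrt (1 - d))"
  have "qnorm2 x + qnorm2 y + qnorm2 z = 1"
    using d yz by (simp add: x_def qnorm2_quat_of_real add.assoc)
  moreover have "q = quat_of_real (qnorm2 y + qnorm2 z) + qcnj x * (q12 * y + q13 * z)"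
    using qv by (simp add: x_def yz row algebra_simps)
  ultimately show "q \<in> num_range 3 (Atilde q12 q13)"
    by (auto simp: num_range_Atilde)
qed

lemma mem_qdisc_sqrt_iff: "0 \<le> t \<Longrightarrow> q \<in> qdisc c (sqrt t) \<longleftrightarrow> qnorm2 (q - c) \<le> t"
  by (simp add: qdisc_def qnorm_eq_sqrt_qnorm2)

lemma quat_of_complex_mem_qdisc_iff:
  "quat_of_complex z \<in> qdisc (quat_of_complex c) r \<longleftrightarrow> z \<in> cdisc c r"
  by (simp add: qdisc_def cdisc_def qnorm_quat_of_complex flip: quat_of_complex_diff)

lemma qdisc_Int_range_quat_of_complex:
  "qdisc (quat_of_complex c) r \<inter> range quat_of_complex = quat_of_complex ` cdisc c r"
  by (auto simp: quat_of_complex_mem_qdisc_iff)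

lemma Union_qdisc_Int_range_quat_of_complex:
  "(\<Union>d\<in>D. qdisc (quat_of_real d) (r d)) \<inter> range quat_of_complex
     = quat_of_complex ` (\<Union>d\<in>D. cdisc (complex_of_real d) (r d))"
proof -
  have "(\<Union>d\<in>D. qdisc (quat_of_real d) (r d)) \<inter> range quat_of_complex
      = (\<Union>d\<in>D. qdisc (quat_of_complex (complex_of_real d)) (r d) \<inter> range quat_of_complex)"
    by (auto simp: quat_of_complex_of_real)
  then show ?thesis
    by (simp only: qdisc_Int_range_quat_of_complex image_UN)
qed

text \<open>Completing the square in d: with
  E = 4 k (x - 1/2)^2 + 4 (1 + k) y^2 - k (k + 1), one has
  4 (1 + k) ((x - d)^2 + y^2 - k d (1 - d)) = (2 (1 + k) d - 2 x - k)^2 + E,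
  and the minimising d = (2 x + k) / (2 (1 + k)) lies in [0, 1] whenever E \<le> 0.\<close>

lemma ex_disc_iff_ellipse:
  fixes x y k :: real
  assumes k: "k > 0"
  shows "(\<exists>d\<in>{0..1}. (x - d)\<^sup>2 + y\<^sup>2 \<le> k * d * (1 - d)) \<longleftrightarrow>
         (x - 1/2)\<^sup>2 / ((k + 1) / 4) + y\<^sup>2 / (k / 4) \<le> 1"
proof -
  define E where "E = 4 * k * (x - 1/2)\<^sup>2 + 4 * (1 + k) * y\<^sup>2 - k * (k + 1)"
  have square: "4 * (1 + k) * ((x - d)\<^sup>2 + y\<^sup>2 - k * d * (1 - d)) = (2 * (1 + k) * d - 2 * x - k)\<^sup>2 + E"
    for d
    by (simp add: E_def power2_eq_square algebra_simps)
  have "(x - 1/2)\<^sup>2 / ((k + 1) / 4) + y\<^sup>2 / (k / 4) \<le> 1 \<longleftrightarrow>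
        (4 * k * (x - 1/2)\<^sup>2 + 4 * (1 + k) * y\<^sup>2) / (k * (k + 1)) \<le> 1"
    using k by (simp add: field_simps)
  also have "\<dots> \<longleftrightarrow> E \<le> 0"
    using k by (simp add: E_def pos_divide_le_eq)
  finally have ellipse_iff: "(x - 1/2)\<^sup>2 / ((k + 1) / 4) + y\<^sup>2 / (k / 4) \<le> 1 \<longleftrightarrow> E \<le> 0" .
  show ?thesis
    unfolding ellipse_iff
  proof
    assume "\<exists>d\<in>{0..1}. (x - d)\<^sup>2 + y\<^sup>2 \<le> k * d * (1 - d)"
    then obtain d where "(x - d)\<^sup>2 + y\<^sup>2 - k * d * (1 - d) \<le> 0"
      by auto
    then have "4 * (1 + k) * ((x - d)\<^sup>2 + y\<^sup>2 - k * d * (1 - d)) \<le> 0"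
      using k by (simp add: mult_nonneg_nonpos)
    then show "E \<le> 0"
      unfolding square using zero_le_power2[of "2 * (1 + k) * d - 2 * x - k"] by linarith
  next
    assume E: "E \<le> 0"
    define d where "d = (2 * x + k) / (2 * (1 + k))"
    have "k * (2 * x - 1)\<^sup>2 = 4 * k * (x - 1/2)\<^sup>2"
      by (simp add: power2_eq_square algebra_simps)
    moreover have "4 * (1 + k) * y\<^sup>2 \<ge> 0"
      using k by simp
    ultimately have "k * (2 * x - 1)\<^sup>2 \<le> k * (k + 1)"
      using E unfolding E_def by linarith
    then have "(2 * x - 1)\<^sup>2 \<le> k + 1"
      using k by simp
    also have "\<dots> \<le> (k + 1)\<^sup>2"
      using k by (simp add: power2_eq_square)
    finally have "(2 * x - 1)\<^sup>2 \<le> (k + 1)\<^sup>2" .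
    then have "\<bar>2 * x - 1\<bar> \<le> \<bar>k + 1\<bar>"
      by (simp only: abs_le_square_iff)
    then have "d \<in> {0..1}"
      using k by (auto simp: d_def divide_le_eq le_divide_eq)
    moreover have "4 * (1 + k) * ((x - d)\<^sup>2 + y\<^sup>2 - k * d * (1 - d)) \<le> 0"
      unfolding square using E k by (simp add: d_def)
    then have "(x - d)\<^sup>2 + y\<^sup>2 \<le> k * d * (1 - d)"
      using k by (simp add: mult_le_0_iff)
    ultimately show "\<exists>d\<in>{0..1}. (x - d)\<^sup>2 + y\<^sup>2 \<le> k * d * (1 - d)"
      by blast
  qed
qed

lemma Union_cdisc_eq_ellipse:
  assumes k: "k > 0"
  shows "(\<Union>d\<in>{0..1::real}. cdisc (complex_of_real d) (sqrt (k * d * (1 - d))))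
           = {Complex x y | x y. (x - 1/2)\<^sup>2 / ((k + 1) / 4) + y\<^sup>2 / (k / 4) \<le> 1}"
  (is "?L = ?R")
proof (rule set_eqI)
  fix z :: complex
  have "z \<in> ?L \<longleftrightarrow>
        (\<exists>d\<in>{0..1}. (Re z - d)\<^sup>2 + (Im z)\<^sup>2 \<le> k * d * (1 - d))"
    using k by (auto simp: cdisc_def cmod_def)
  also have "\<dots> \<longleftrightarrow> (Re z - 1/2)\<^sup>2 / ((k + 1) / 4) + (Im z)\<^sup>2 / (k / 4) \<le> 1"
    by (rule ex_disc_iff_ellipse[OF k])
  also have "\<dots> \<longleftrightarrow> z \<in> ?R"
    by (cases z) auto
  finally show "z \<in> ?L \<longleftrightarrow> z \<in> ?R" .
qed

theorem mainTheorem8: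
  fixes q12 q13 :: quat and k :: real
  assumes hk: "k = (qnorm q12)\<^sup>2 + (qnorm q13)\<^sup>2" and kpos: "k > 0"
  shows "num_range 3 (Atilde q12 q13) =
           (\<Union>d\<in>{0..1::real}. qdisc (quat_of_real d) (sqrt (k * d * (1 - d))))
       \<and> num_range 3 (Atilde q12 q13) \<inter> range quat_of_complex =
           quat_of_complex ` (\<Union>d\<in>{0..1::real}. cdisc (complex_of_real d) (sqrt (k * d * (1 - d))))
       \<and> (\<Union>d\<in>{0..1::real}. cdisc (complex_of_real d) (sqrt (k * d * (1 - d)))) =
           {Complex x y | x y. (x - 1/2)\<^sup>2 / ((k + 1) / 4) + y\<^sup>2 / (k / 4) \<le> 1}"
proof -
  have k: "k = qnorm2 q12 + qnorm2 q13"
    by (simp add: hk power2_qnorm)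
  have W: "num_range 3 (Atilde q12 q13) =
             (\<Union>d\<in>{0..1::real}. qdisc (quat_of_real d) (sqrt (k * d * (1 - d))))"
    using kpos by (auto simp: set_eq_iff mem_num_range_Atilde_iff[OF k kpos] mem_qdisc_sqrt_iff)
  show ?thesis
    using W Union_qdisc_Int_range_quat_of_complex Union_cdisc_eq_ellipse[OF kpos] by simp
qed

end
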